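(* Let $\beta$ be a nonstandard hypernatural number and $T$ a $\beta$-tree. Then for every $s\in T/st(T)$ there exists $X\in[\mathbb{N}]^\infty$ with $s\sqsubseteq X$ such that $[s,X]\subseteq[T]$.
   Context: Setting (Alpha-Theory of Benci–Di Nasso): ZFC together with a new symbol $\alpha$ satisfying: ($\alpha$1) every sequence $\varphi=\langle\varphi_i:i\in\mathbb{N}\rangle$ has a unique ideal value $\varphi[\alpha]$; ($\alpha$2) if $\varphi[\alpha]=\psi[\alpha]$ and $f\circ\varphi$, $f\circ\psi$ make sense then $(f\circ\varphi)[\alpha]=(f\circ\psi)[\alpha]$; ($\alpha$3) constant real sequences $r$ have ideal value $r$, and $\langle i\rangle$ has ideal value $\alpha\notin\mathbb{N}$; ($\alpha$4) if $\vartheta_i=\{\varphi_i,\psi_i\}$ then $\vartheta[\alpha]=\{\varphi[\alpha],\psi[\alpha]\}$; ($\alpha$5) the constant sequence $\emptyset$ has ideal value $\emptyset$, and for nonempty $\psi_i$, $\psi[\alpha]=\{\vartheta[\alpha]:\vartheta_i\in\psi_i\ \forall i\}$. ${}^*A$ is the ideal value of the constant sequence $A$; elements of ${}^*\mathbb{N}\setminus\mathbb{N}$ are nonstandard hypernatural numbers. For finite $s$ and $X\subseteq\mathbb{N}$, $s\sqsubseteq X$ means $s=\{j\in X:j\le i\}$ for some $i$; $[s,X]=\{Y\in[\mathbb{N}]^\infty:s\sqsubseteq Y\subseteq X\}$. A tree on $\mathbb{N}$ is a nonempty $T\subseteq[\mathbb{N}]^{<\infty}$ closed under $\sqsubseteq$-initial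 segments; $[T]=\{X\in[\mathbb{N}]^\infty:$ every finite $s\sqsubseteq X$ is in $T\}$; stem $st(T)$ = $\sqsubseteq$-maximal $s\in T$ comparable with all elements of $T$; $T/s=\{t\in T:s\sqsubseteq t\}$. A $\beta$-tree is a tree $T$ with a stem, $T/st(T)\neq\emptyset$, and $s\cup\{\beta\}\in{}^*T$ for all $s\in T/st(T)$. *)

theory Defs
  imports Main
begin

text \<open>Alpha-Theory is modelled by its ultrapower semantics: the ideal value of a
sequence is its class modulo the nonprincipal ultrafilter
U = {A. alpha in *A} on the naturals; membership of ideal values holds iff
it holds for U-almost all indices.\<close>

definition nonprincipal_ultrafilter :: "nat set set \<Rightarrow> bool" where
  "nonprincipal_ultrafilter U \<longleftrightarrow>
     UNIV \<in> U \<and> {} \<notin> U \<and>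
     (\<forall>A B. A \<in> U \<and> A \<subseteq> B \<longrightarrow> B \<in> U) \<and>
     (\<forall>A B. A \<in> U \<and> B \<in> U \<longrightarrow> A \<inter> B \<in> U) \<and>
     (\<forall>A. A \<in> U \<or> - A \<in> U) \<and>
     (\<forall>A. finite A \<longrightarrow> A \<notin> U)"

text \<open>A hypernatural beta = [f]_U is nonstandard iff it equals no standard n.\<close>
definition nonstandard_hypernat :: "nat set set \<Rightarrow> (nat \<Rightarrow> nat) \<Rightarrow> bool" where
  "nonstandard_hypernat U f \<longleftrightarrow> (\<forall>n::nat. {i. f i = n} \<notin> U)"

definition initseg :: "nat set \<Rightarrow> nat set \<Rightarrow> bool" where
  "initseg s X \<longleftrightarrow> (\<exists>i. s = {j \<in> X. j \<le> i})"

definition interval :: "nat set \<Rightarrow> nat set \<Rightarrow> nat set set" where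
  "interval s X = {Y. infinite Y \<and> initseg s Y \<and> Y \<subseteq> X}"

definition is_tree :: "nat set set \<Rightarrow> bool" where
  "is_tree T \<longleftrightarrow> T \<noteq> {} \<and> (\<forall>s\<in>T. finite s) \<and>
     (\<forall>t\<in>T. \<forall>s. initseg s t \<longrightarrow> s \<in> T)"

definition body :: "nat set set \<Rightarrow> nat set set" where
  "body T = {X. infinite X \<and> (\<forall>s. finite s \<and> initseg s X \<longrightarrow> s \<in> T)}"

definition comparable_all :: "nat set set \<Rightarrow> nat set \<Rightarrow> bool" where
  "comparable_all T s \<longleftrightarrow> (\<forall>t\<in>T. initseg s t \<or> initseg t s)"

definition is_stem :: "nat set set \<Rightarrow> nat set \<Rightarrow> bool" where
  "is_stem T s \<longleftrightarrow> s \<in> T \<and> comparable_all T s \<and>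
     (\<forall>u\<in>T. comparable_all T u \<and> initseg s u \<longrightarrow> u = s)"

definition stem :: "nat set set \<Rightarrow> nat set" where
  "stem T = (THE s. is_stem T s)"

definition tree_after :: "nat set set \<Rightarrow> nat set \<Rightarrow> nat set set" where
  "tree_after T s = {t \<in> T. initseg s t}"

text \<open>beta-tree, for beta = [f]_U: the condition  s \<union> {beta} \<in> *T  means
  {i. s \<union> {f i} \<in> T} \<in> U.\<close>
definition beta_tree :: "nat set set \<Rightarrow> (nat \<Rightarrow> nat) \<Rightarrow> nat set set \<Rightarrow> bool" where
  "beta_tree U f T \<longleftrightarrow> is_tree T \<and> (\<exists>s. is_stem T s) \<and>
     tree_after T (stem T) \<noteq> {} \<and>
     (\<forall>s\<in>tree_after T (stem T). {i. s \<union> {f i} \<in> T} \<in> U)"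

end

theory Submission
  imports Defs
begin

text \<open>Fix s in T/st(T) and a bound m of s. Every node s \<union> F with F above m lies in T/st(T),
so the \<beta>-tree condition holds U-almost surely for each of finitely many such nodes at once;
as \<beta> is nonstandard, some index i in that U-large set gives a common successor f i above any
prescribed bound. Choosing successors in this way one after the other produces an infinite set
G above m all of whose finite subsets F give nodes s \<union> F of T, and X = s \<union> G then works.\<close>

lemma nonprincipal_ultrafilter_Int:
  "nonprincipal_ultrafilter U \<Longrightarrow> A \<in> U \<Longrightarrow> B \<in> U \<Longrightarrow> A \<inter> B \<in> U"
  unfolding nonprincipal_ultrafilter_def by meson

lemma nonprincipal_ultrafilter_Inter:
  assumes U: "nonprincipal_ultrafilter U" and "finite \<A>" "\<A> \<subseteq> U"
  shows "\<Inter>\<A> \<in> U"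
  using assms(2,3)
proof (induction \<A> rule: finite_induct)
  case empty
  have "UNIV \<in> U" using U unfolding nonprincipal_ultrafilter_def by meson
  then show ?case by simp
next
  case (insert A \<A>)
  then show ?case using nonprincipal_ultrafilter_Int[OF U, of A "\<Inter>\<A>"] by simp
qed

lemma nonprincipal_ultrafilter_Compl:
  "nonprincipal_ultrafilter U \<Longrightarrow> A \<notin> U \<Longrightarrow> - A \<in> U"
  unfolding nonprincipal_ultrafilter_def by meson

lemma nonprincipal_ultrafilter_nonempty:
  assumes "nonprincipal_ultrafilter U" "A \<in> U" shows "\<exists>i. i \<in> A"
proof -
  have "{} \<notin> U" using assms(1) unfolding nonprincipal_ultrafilter_def by meson
  with assms(2) show ?thesis by (metis equals0I)
qed

lemma nonstandard_hypernat_greater: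
  assumes U: "nonprincipal_ultrafilter U" and ns: "nonstandard_hypernat U f"
  shows "{i. b < f i} \<in> U"
proof -
  have "- {i. f i = n} \<in> U" for n
    using ns nonprincipal_ultrafilter_Compl[OF U] unfolding nonstandard_hypernat_def by blast
  then have "\<Inter>((\<lambda>n. - {i. f i = n}) ` {..b}) \<in> U"
    by (intro nonprincipal_ultrafilter_Inter[OF U]) auto
  moreover have "\<Inter>((\<lambda>n. - {i. f i = n}) ` {..b}) = {i. b < f i}" by auto
  ultimately show ?thesis by simp
qed

lemma initseg_trans:
  assumes "initseg a b" "initseg b c" shows "initseg a c"
proof -
  from assms obtain i j where "a = {x \<in> b. x \<le> i}" "b = {x \<in> c. x \<le> j}"
    unfolding initseg_def by blast
  then have "a = {x \<in> c. x \<le> min i j}" by auto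
  then show ?thesis unfolding initseg_def by blast
qed

lemma initseg_union_above:
  assumes "\<forall>x\<in>s. x \<le> m" and "\<forall>x\<in>G. m < x"
  shows "initseg s (s \<union> G)"
proof -
  have "s = {j \<in> s \<union> G. j \<le> m}" using assms by force
  then show ?thesis unfolding initseg_def by blast
qed

lemma beta_tree_common_successor:
  assumes U: "nonprincipal_ultrafilter U" and ns: "nonstandard_hypernat U f"
    and beta: "beta_tree U f T"
    and "finite \<F>" "\<F> \<subseteq> tree_after T (stem T)"
  shows "\<exists>n. b < n \<and> (\<forall>t\<in>\<F>. insert n t \<in> T)"
proof -
  have "(\<lambda>t. {i. t \<union> {f i} \<in> T}) ` \<F> \<subseteq> U"
    using beta assms(5) unfolding beta_tree_def by blast
  then have "\<Inter>((\<lambda>t. {i. t \<union> {f i} \<in> T}) ` \<F>) \<in> U"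
    using assms(4) by (intro nonprincipal_ultrafilter_Inter[OF U]) auto
  then have "{i. b < f i} \<inter> \<Inter>((\<lambda>t. {i. t \<union> {f i} \<in> T}) ` \<F>) \<in> U"
    by (intro nonprincipal_ultrafilter_Int[OF U] nonstandard_hypernat_greater[OF U ns])
  then obtain i where "b < f i" "\<forall>t\<in>\<F>. t \<union> {f i} \<in> T"
    using nonprincipal_ultrafilter_nonempty[OF U] by blast
  then show ?thesis by auto
qed

lemma beta_tree_successor_above:
  assumes U: "nonprincipal_ultrafilter U" and ns: "nonstandard_hypernat U f"
    and beta: "beta_tree U f T"
    and s: "s \<in> tree_after T (stem T)" and "\<forall>x\<in>s. x \<le> m"
    and S: "finite S" "\<forall>x\<in>S. m < x"
  shows "\<exists>n. m < n \<and> (\<forall>x\<in>S. x < n) \<and> (\<forall>F\<subseteq>S. s \<union> F \<in> T \<longrightarrow> insert n (s \<union> F) \<in> T)"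
proof -
  let ?\<F> = "(\<lambda>F. s \<union> F) ` {F. F \<subseteq> S \<and> s \<union> F \<in> T}"
  have nodes: "?\<F> \<subseteq> tree_after T (stem T)"
  proof
    fix t assume "t \<in> ?\<F>"
    then obtain F where F: "F \<subseteq> S" "t = s \<union> F" "t \<in> T" by blast
    have "initseg s t" using F S(2) assms(5) initseg_union_above by blast
    with s F show "t \<in> tree_after T (stem T)"
      unfolding tree_after_def by (blast intro: initseg_trans)
  qed
  have "finite ?\<F>"
  proof (rule finite_imageI)
    have "{F. F \<subseteq> S \<and> s \<union> F \<in> T} \<subseteq> Pow S" by blast
    then show "finite {F. F \<subseteq> S \<and> s \<union> F \<in> T}"
      using S(1) by (rule finite_subset[OF _ finite_Pow_iff[THEN iffD2]])
  qed
  from beta_tree_common_successor[OF U ns beta this nodes]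
  obtain n where n: "Max (insert m S) < n" "\<forall>t\<in>?\<F>. insert n t \<in> T" by blast
  have "m < n \<and> (\<forall>x\<in>S. x < n)" using n(1) S(1) by (simp add: Max_less_iff)
  then show ?thesis using n(2) by blast
qed

lemma infinite_set_of_extensions:
  fixes T :: "nat set set"
  assumes "s \<in> T"
    and successor: "\<And>S. finite S \<Longrightarrow> \<forall>x\<in>S. m < x \<Longrightarrow>
      \<exists>n. m < n \<and> (\<forall>x\<in>S. x < n) \<and> (\<forall>F\<subseteq>S. s \<union> F \<in> T \<longrightarrow> insert n (s \<union> F) \<in> T)"
  shows "\<exists>G. infinite G \<and> (\<forall>x\<in>G. m < x) \<and> (\<forall>F. finite F \<and> F \<subseteq> G \<longrightarrow> s \<union> F \<in> T)"
proof -
  obtain g where g: "\<And>S. finite S \<Longrightarrow> \<forall>x\<in>S. m < x \<Longrightarrow>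
      m < g S \<and> (\<forall>x\<in>S. x < g S) \<and> (\<forall>F\<subseteq>S. s \<union> F \<in> T \<longrightarrow> insert (g S) (s \<union> F) \<in> T)"
    using successor by metis
  define xs where "xs k = ((\<lambda>S. insert (g S) S) ^^ k) {}" for k
  have xs_0: "xs 0 = {}" and xs_Suc: "xs (Suc k) = insert (g (xs k)) (xs k)" for k
    unfolding xs_def by auto
  have xs_finite: "finite (xs k)" for k
    by (induction k) (auto simp: xs_0 xs_Suc)
  have xs_above: "\<forall>x\<in>xs k. m < x" for k
    by (induction k) (auto simp: xs_0 xs_Suc g xs_finite)
  note g_xs = g[OF xs_finite xs_above]
  have "g (xs k) \<notin> xs k" for k using g_xs by blast
  then have card_xs: "card (xs k) = k" for k
    by (induction k) (simp_all add: xs_0 xs_Suc xs_finite)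
  have xs_mono: "xs k \<subseteq> xs l" if "k \<le> l" for k l
    using that by (induction l) (auto simp: xs_Suc le_Suc_eq)
  have xs_extensions: "\<forall>F\<subseteq>xs k. s \<union> F \<in> T" for k
  proof (induction k)
    case 0
    then show ?case using \<open>s \<in> T\<close> by (simp add: xs_0)
  next
    case (Suc k)
    show ?case
    proof (intro allI impI)
      fix F assume F: "F \<subseteq> xs (Suc k)"
      then have "F - {g (xs k)} \<subseteq> xs k" by (auto simp: xs_Suc)
      then have "s \<union> (F - {g (xs k)}) \<in> T" "insert (g (xs k)) (s \<union> (F - {g (xs k)})) \<in> T"
        using Suc g_xs by blast+
      moreover have "s \<union> F = insert (g (xs k)) (s \<union> (F - {g (xs k)})) \<or>
          s \<union> F = s \<union> (F - {g (xs k)})" by blast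
      ultimately show "s \<union> F \<in> T" by metis
    qed
  qed
  define G where "G = \<Union>(range xs)"
  have "infinite G"
  proof
    assume "finite G"
    then have "card (xs (Suc (card G))) \<le> card G"
      by (intro card_mono) (auto simp: G_def)
    then show False by (simp add: card_xs)
  qed
  moreover have "\<forall>x\<in>G. m < x" using xs_above unfolding G_def by blast
  moreover have "s \<union> F \<in> T" if "finite F" "F \<subseteq> G" for F
  proof -
    have chain: "subset.chain UNIV (range xs)"
      unfolding subset_chain_def using xs_mono nat_le_linear by blast
    have "F \<subseteq> \<Union>(range xs)" "range xs \<noteq> {}" using \<open>F \<subseteq> G\<close> unfolding G_def by auto
    then obtain B where "B \<in> range xs" "F \<subseteq> B"
      by (rule finite_subset_Union_chain[OF \<open>finite F\<close> _ _ chain])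
    then show ?thesis using xs_extensions by blast
  qed
  ultimately show ?thesis by (intro exI[of _ G]) simp
qed

lemma interval_union_subset_body:
  assumes tree: "is_tree T" and "s \<in> T"
    and s_below: "\<forall>x\<in>s. x \<le> m" and G_above: "\<forall>x\<in>G. m < x"
    and extensions: "\<forall>F. finite F \<and> F \<subseteq> G \<longrightarrow> s \<union> F \<in> T"
  shows "interval s (s \<union> G) \<subseteq> body T"
proof
  fix Y assume "Y \<in> interval s (s \<union> G)"
  then have "infinite Y" and "initseg s Y" and Y_sub: "Y \<subseteq> s \<union> G"
    unfolding interval_def by auto
  have "s \<subseteq> Y" using \<open>initseg s Y\<close> unfolding initseg_def by blast
  have Y_below: "{j \<in> Y. j \<le> m} = s"
  proof
    show "{j \<in> Y. j \<le> m} \<subseteq> s" using Y_sub G_above by (auto simp: not_less[symmetric])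
    show "s \<subseteq> {j \<in> Y. j \<le> m}" using \<open>s \<subseteq> Y\<close> s_below by auto
  qed
  have "u \<in> T" if "finite u" "initseg u Y" for u
  proof -
    obtain i where u: "u = {j \<in> Y. j \<le> i}" using \<open>initseg u Y\<close> unfolding initseg_def by blast
    show ?thesis
    proof (cases "i \<le> m")
      case True
      then have "u = {j \<in> {j \<in> Y. j \<le> m}. j \<le> i}" using u by auto
      then have "u = {j \<in> s. j \<le> i}" by (simp only: Y_below)
      then have "initseg u s" unfolding initseg_def by blast
      then show ?thesis using tree \<open>s \<in> T\<close> unfolding is_tree_def by blast
    next
      case False
      then have "s \<subseteq> u" using u \<open>s \<subseteq> Y\<close> s_below by auto
      moreover have "u - s \<subseteq> G" using u Y_sub by blast
      then have "s \<union> (u - s) \<in> T" using extensions \<open>finite u\<close> by blast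
      ultimately show ?thesis by (simp add: Un_absorb1 Un_Diff_cancel)
    qed
  qed
  then show "Y \<in> body T" unfolding body_def using \<open>infinite Y\<close> by blast
qed

theorem mainTheorem18:
  fixes U :: "nat set set" and f :: "nat \<Rightarrow> nat" and T :: "nat set set"
  assumes "nonprincipal_ultrafilter U"
    and "nonstandard_hypernat U f"
    and "beta_tree U f T"
  shows "\<forall>s\<in>tree_after T (stem T). \<exists>X. infinite X \<and> initseg s X \<and> interval s X \<subseteq> body T"
proof
  fix s assume s: "s \<in> tree_after T (stem T)"
  have tree: "is_tree T" using assms(3) unfolding beta_tree_def by blast
  have "s \<in> T" using s unfolding tree_after_def by blast
  then have "finite s" using tree unfolding is_tree_def by blast
  define m where "m = Max (insert 0 s)"
  have s_below: "\<forall>x\<in>s. x \<le> m" using \<open>finite s\<close> unfolding m_def by simp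
  obtain G where G: "infinite G" "\<forall>x\<in>G. m < x" "\<forall>F. finite F \<and> F \<subseteq> G \<longrightarrow> s \<union> F \<in> T"
    using infinite_set_of_extensions[OF \<open>s \<in> T\<close> beta_tree_successor_above[OF assms s s_below]]
    by blast
  have "infinite (s \<union> G)" using G(1) by simp
  moreover have "initseg s (s \<union> G)" using initseg_union_above[OF s_below G(2)] .
  moreover have "interval s (s \<union> G) \<subseteq> body T"
    using interval_union_subset_body[OF tree \<open>s \<in> T\<close> s_below G(2,3)] .
  ultimately show "\<exists>X. infinite X \<and> initseg s X \<and> interval s X \<subseteq> body T" by blast
qed

end
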